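(* Let $R$ be a commutative unital ring, $G$ a group and $(\mathcal B_1,\Phi_1)\subseteq(\mathcal B_2,\Phi_2)$ a partial subaction of $G$ on generalized Boolean algebras with $\Phi_k=(\{\mathcal I_{k,t}\},\{\phi_{k,t}\})$, and let $A_k=\mathrm{Lc}(R,\mathcal B_k)\rtimes_{\Phi_k}G$, with $A_1\subseteq A_2$. Suppose $\mathcal B_1$ is an ideal of $\mathcal B_2$, and suppose $C_1$ is a cover of $\mathcal B_1$ and, for each $g\in G$, $C_g$ is a cover of $\mathcal I_{2,g}$, such that for all $g\in G$, $X,Y\in C_1$ and $V\in C_{g^{-1}}$ there exists $Z\in\mathcal I_{1,g}$ with $X\cap\phi_{2,g}(Y\cap V)\le Z$. Then for every $U\in\mathcal B_1$, $(U\delta_e)A_1(U\delta_e)=(U\delta_e)A_2(U\delta_e)$.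
   Context: A generalized Boolean algebra is a distributive relatively complemented lattice with least element $0$; an ideal is a subset closed under finite joins and under meets with arbitrary elements; a cover of $\mathcal B$ (or of an ideal $\mathcal I$) is a subset $C$ such that every element is $\le$ a finite join of elements of $C$. A partial action $\Phi$ of $G$ on $\mathcal B$: ideals $\mathcal I_t$ and isomorphisms $\phi_t:\mathcal I_{t^{-1}}\to\mathcal I_t$ with $\mathcal I_e=\mathcal B$, $\phi_e=\mathrm{id}$, $\phi_s(\mathcal I_{s^{-1}}\cap\mathcal I_t)=\mathcal I_s\cap\mathcal I_{st}$, $\phi_s\phi_t=\phi_{st}$ where defined. A partial subaction: $\mathcal B_1\subseteq\mathcal B_2$ sub generalized Boolean algebra, $\mathcal I_{1,t}\subseteq\mathcal I_{2,t}$, $\phi_{2,t}$ restricting to $\phi_{1,t}$. $\mathrm{Lc}(R,\mathcal B)$ is the algebra of locally constant compactly supported $R$-valued functions on the Stone space of $\mathcal B$, spanned by idempotents $1_U$; $\mathrm{Lc}(R,\mathcal B)\rtimes_\Phi G=\bigoplus_g\mathrm{Lc}(R,\mathcal I_g)\delta_g$ with $U\delta_g:=1_U\delta_g$ and $(U\delta_g)(V\delta_h)=\phi_g(\phi_{g^{-1}}(U)\cap V)\delta_{gh}$. $A_1$ is identified with the $R$-span of $\{U\delta_g:U\in\mathcal I_{1,g}\}$ in $A_2$. *)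

theory Defs
  imports Main
begin

text \<open>Generalized Boolean algebras are represented (via Stone representation) as
  rings of sets: families of subsets of a type closed under empty set, binary
  union, intersection and relative difference.\<close>

definition gen_bool_alg :: "'x set set \<Rightarrow> bool" where
  "gen_bool_alg B \<longleftrightarrow> {} \<in> B \<and>
     (\<forall>U\<in>B. \<forall>V\<in>B. U \<union> V \<in> B \<and> U \<inter> V \<in> B \<and> U - V \<in> B)"

definition gba_ideal :: "'x set set \<Rightarrow> 'x set set \<Rightarrow> bool" where
  "gba_ideal I B \<longleftrightarrow> I \<subseteq> B \<and> {} \<in> I \<and>
     (\<forall>U\<in>I. \<forall>V\<in>I. U \<union> V \<in> I) \<and> (\<forall>U\<in>I. \<forall>V\<in>B. U \<inter> V \<in> I)"

definition is_cover :: "'x set set \<Rightarrow> 'x set set \<Rightarrow> bool" where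
  "is_cover C I \<longleftrightarrow> C \<subseteq> I \<and> (\<forall>U\<in>I. \<exists>F. finite F \<and> F \<subseteq> C \<and> U \<subseteq> \<Union>F)"

text \<open>Partial action of a group (written additively: e = 0, st = s + t, t^-1 = - t)
  on the generalized Boolean algebra B: ideals I t and isomorphisms
  phi t : I (-t) \<rightarrow> I t.\<close>
definition partial_action ::
  "'x set set \<Rightarrow> ('g::group_add \<Rightarrow> 'x set set) \<Rightarrow> ('g \<Rightarrow> 'x set \<Rightarrow> 'x set) \<Rightarrow> bool" where
  "partial_action B I \<phi> \<longleftrightarrow>
     gen_bool_alg B \<and> I 0 = B \<and> (\<forall>U\<in>B. \<phi> 0 U = U) \<and>
     (\<forall>t. gba_ideal (I t) B) \<and>
     (\<forall>t. bij_betw (\<phi> t) (I (- t)) (I t)) \<and>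
     (\<forall>t. \<forall>U\<in>I (- t). \<forall>V\<in>I (- t).
          \<phi> t (U \<union> V) = \<phi> t U \<union> \<phi> t V \<and> \<phi> t (U \<inter> V) = \<phi> t U \<inter> \<phi> t V) \<and>
     (\<forall>s t. \<phi> s ` (I (- s) \<inter> I t) = I s \<inter> I (s + t)) \<and>
     (\<forall>s t U. U \<in> I (- t) \<and> \<phi> t U \<in> I (- s) \<longrightarrow> \<phi> s (\<phi> t U) = \<phi> (s + t) U)"

definition partial_subaction ::
  "'x set set \<Rightarrow> ('g::group_add \<Rightarrow> 'x set set) \<Rightarrow> ('g \<Rightarrow> 'x set \<Rightarrow> 'x set) \<Rightarrow>
   'x set set \<Rightarrow> ('g \<Rightarrow> 'x set set) \<Rightarrow> ('g \<Rightarrow> 'x set \<Rightarrow> 'x set) \<Rightarrow> bool" where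
  "partial_subaction B1 I1 \<phi>1 B2 I2 \<phi>2 \<longleftrightarrow>
     partial_action B1 I1 \<phi>1 \<and> partial_action B2 I2 \<phi>2 \<and> B1 \<subseteq> B2 \<and>
     (\<forall>t. I1 t \<subseteq> I2 t) \<and> (\<forall>t. \<forall>U\<in>I1 (- t). \<phi>1 t U = \<phi>2 t U)"

text \<open>Indicator function and Lc(R, B): the R-span of the indicators 1_U, U in B
  (= locally constant compactly supported functions on the Stone space).\<close>
definition ind :: "'x set \<Rightarrow> 'x \<Rightarrow> 'r::comm_ring_1" where
  "ind U x = (if x \<in> U then 1 else 0)"

definition Lc :: "'x set set \<Rightarrow> ('x \<Rightarrow> 'r::comm_ring_1) set" where
  "Lc B = {f. \<exists>S c. finite S \<and> S \<subseteq> B \<and> f = (\<lambda>x. \<Sum>U\<in>S. c U * ind U x)}"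

definition act :: "('g \<Rightarrow> 'x set \<Rightarrow> 'x set) \<Rightarrow> 'g \<Rightarrow> ('x \<Rightarrow> 'r::comm_ring_1) \<Rightarrow> 'x \<Rightarrow> 'r" where
  "act \<phi> g f = (\<lambda>x. \<Sum>r\<in>range f - {0}. r * ind (\<phi> g (f -` {r})) x)"

text \<open>The partial crossed product Lc(R,B) \<rtimes> G: finitely supported families
  a g \<in> Lc(R, I g), a = sum_g (a g) delta_g.\<close>
definition CP :: "('g::group_add \<Rightarrow> 'x set set) \<Rightarrow> ('g \<Rightarrow> 'x \<Rightarrow> 'r::comm_ring_1) set" where
  "CP I = {a. finite {g. a g \<noteq> (\<lambda>_. 0)} \<and> (\<forall>g. a g \<in> Lc (I g))}"

text \<open>Multiplication: (a delta_g)(b delta_h) = phi_g(phi_{g^-1}(a) b) delta_{gh}.\<close>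
definition cp_mult :: "('g::group_add \<Rightarrow> 'x set \<Rightarrow> 'x set) \<Rightarrow>
    ('g \<Rightarrow> 'x \<Rightarrow> 'r::comm_ring_1) \<Rightarrow> ('g \<Rightarrow> 'x \<Rightarrow> 'r) \<Rightarrow> ('g \<Rightarrow> 'x \<Rightarrow> 'r)" where
  "cp_mult \<phi> a b = (\<lambda>k x. \<Sum>g\<in>{g. a g \<noteq> (\<lambda>_. 0)}.
       act \<phi> g (\<lambda>y. act \<phi> (- g) (a g) y * b (- g + k) y) x)"

definition delta :: "'x set \<Rightarrow> 'g::group_add \<Rightarrow> 'g \<Rightarrow> 'x \<Rightarrow> 'r::comm_ring_1" where
  "delta U g = (\<lambda>k. if k = g then ind U else (\<lambda>_. 0))"

end

theory Submission
  imports Defs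
begin

(* Sandwiching by the idempotent U delta_e can be computed explicitly: the g-component of
   (U delta_e) a (U delta_e) is 1_U a_g 1_(Q_g) with Q_g = phi_g (U \<inter> phi_(g^-1) (supp (1_U a_g))),
   and sandwiching this element once more returns it unchanged.  For a in A_2 the level sets of
   the g-component lie in U, hence in B_1 (an ideal of B_2), and inside U \<inter> Q_g.  Covering U by
   C_1 and phi_(g^-1) (supp (1_U a_g)) by C_(g^-1) puts U \<inter> Q_g inside a finite union of sets
   X \<inter> phi_g (Y \<inter> V), each of which the hypothesis bounds by an element of I_(1,g).  So the
   sandwich of a lies in A_1 and is its own sandwich. *)

lemma gen_bool_alg_Union:
  assumes "gen_bool_alg B" "finite A" "A \<subseteq> B"
  shows "\<Union>A \<in> B"
  using assms(2,3)
proof (induction A rule: finite_induct)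
  case empty
  then show ?case using assms(1) unfolding gen_bool_alg_def by simp
next
  case (insert V A)
  then show ?case using assms(1) unfolding gen_bool_alg_def by simp
qed

lemma gba_ideal_gen_bool_alg:
  assumes "gba_ideal I B" "gen_bool_alg B"
  shows "gen_bool_alg I"
proof -
  have "U - V \<in> I" if "U \<in> I" "V \<in> I" for U V
  proof -
    have "U - V \<in> B" using assms that unfolding gba_ideal_def gen_bool_alg_def by blast
    then have "U \<inter> (U - V) \<in> I" using assms(1) \<open>U \<in> I\<close> unfolding gba_ideal_def by blast
    then show ?thesis by (simp add: Int_absorb1)
  qed
  then show ?thesis using assms(1) unfolding gba_ideal_def gen_bool_alg_def by blast
qed

definition simple_fun_in :: "'x set set \<Rightarrow> ('x \<Rightarrow> 'r::zero) \<Rightarrow> bool" where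
  "simple_fun_in B f \<longleftrightarrow> finite (range f) \<and> (\<forall>r. r \<noteq> 0 \<longrightarrow> f -` {r} \<in> B)"

lemma fun_eqI_vimage:
  fixes f g :: "'x \<Rightarrow> 'r::zero"
  assumes "\<And>r. r \<noteq> 0 \<Longrightarrow> f -` {r} = g -` {r}"
  shows "f = g"
  using assms by (metis vimage_singleton_eq ext)

lemma vimage_mult_ind:
  fixes f :: "'x \<Rightarrow> 'r::comm_ring_1"
  assumes "r \<noteq> 0"
  shows "(\<lambda>x. f x * ind T x) -` {r} = f -` {r} \<inter> T"
  using assms by (auto simp: ind_def split: if_splits)

lemma support_ind_mult_ind: "{x. ind U x * f x * ind Q x \<noteq> (0::'r::comm_ring_1)} \<subseteq> U \<inter> Q"
  by (auto simp: ind_def)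

lemma simple_fun_mono: "simple_fun_in A f \<Longrightarrow> A \<subseteq> A' \<Longrightarrow> simple_fun_in A' f"
  unfolding simple_fun_in_def by blast

lemma simple_fun_support:
  assumes "gen_bool_alg B" "simple_fun_in B f"
  shows "{x. f x \<noteq> 0} \<in> B"
proof -
  have "{x. f x \<noteq> 0} = \<Union>((\<lambda>r. f -` {r}) ` (range f - {0}))" by auto
  also have "\<dots> \<in> B"
    using assms(2) by (intro gen_bool_alg_Union[OF assms(1)]) (auto simp: simple_fun_in_def)
  finally show ?thesis .
qed

lemma simple_fun_ind:
  assumes "gen_bool_alg B" "U \<in> B"
  shows "simple_fun_in B (ind U :: 'x \<Rightarrow> 'r::comm_ring_1)"
proof -
  have "range (ind U :: 'x \<Rightarrow> 'r) \<subseteq> {0, 1}" by (auto simp: ind_def)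
  then have "finite (range (ind U :: 'x \<Rightarrow> 'r))" by (rule finite_subset) simp
  moreover have "(ind U :: 'x \<Rightarrow> 'r) -` {r} \<in> {U, {}}" if "r \<noteq> 0" for r
    using that by (auto simp: ind_def split: if_splits)
  ultimately show ?thesis
    using assms unfolding simple_fun_in_def gen_bool_alg_def by fastforce
qed

lemma simple_fun_mult_ind:
  fixes f :: "'x \<Rightarrow> 'r::comm_ring_1"
  assumes "simple_fun_in A f" "\<And>r. r \<noteq> 0 \<Longrightarrow> f -` {r} \<inter> T \<in> A"
  shows "simple_fun_in A (\<lambda>x. f x * ind T x)" and "simple_fun_in A (\<lambda>x. ind T x * f x)"
proof -
  have "range (\<lambda>x. f x * ind T x) \<subseteq> insert 0 (range f)" by (auto simp: ind_def)
  then show "simple_fun_in A (\<lambda>x. f x * ind T x)"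
    using assms vimage_mult_ind unfolding simple_fun_in_def by (metis finite_insert finite_subset)
  then show "simple_fun_in A (\<lambda>x. ind T x * f x)" by (simp add: mult.commute)
qed

lemma simple_fun_add_scaled_ind:
  fixes h :: "'x \<Rightarrow> 'r::comm_ring_1"
  assumes B: "gen_bool_alg B" and V: "V \<in> B" and h: "simple_fun_in B h"
  shows "simple_fun_in B (\<lambda>x. c * ind V x + h x)"
proof -
  have "range (\<lambda>x. c * ind V x + h x) \<subseteq> range h \<union> (\<lambda>s. c + s) ` range h"
    by (auto simp: ind_def)
  then have "finite (range (\<lambda>x. c * ind V x + h x))"
    using h unfolding simple_fun_in_def by (meson finite_UnI finite_imageI finite_subset)
  moreover have "(\<lambda>x. c * ind V x + h x) -` {r} \<in> B" if "r \<noteq> 0" for r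
  proof -
    have split: "(\<lambda>x. c * ind V x + h x) -` {r} = (h -` {r} - V) \<union> (V \<inter> h -` {r - c})"
      by (auto simp: ind_def algebra_simps)
    have "h -` {r} - V \<in> B" using h that V B unfolding simple_fun_in_def gen_bool_alg_def by blast
    moreover have "V \<inter> h -` {r - c} \<in> B"
    proof (cases "r - c = 0")
      case True
      then have "V \<inter> h -` {r - c} = V - {x. h x \<noteq> 0}" by auto
      then show ?thesis using simple_fun_support[OF B h] V B unfolding gen_bool_alg_def by simp
    next
      case False
      then show ?thesis using h V B unfolding simple_fun_in_def gen_bool_alg_def by blast
    qed
    ultimately show ?thesis unfolding split using B unfolding gen_bool_alg_def by blast
  qed
  ultimately show ?thesis unfolding simple_fun_in_def by blast
qed

lemma Lc_imp_simple_fun: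
  fixes f :: "'x \<Rightarrow> 'r::comm_ring_1"
  assumes B: "gen_bool_alg B" and f: "f \<in> Lc B"
  shows "simple_fun_in B f"
proof -
  obtain S c where S: "finite S" "S \<subseteq> B" and f_eq: "f = (\<lambda>x. \<Sum>U\<in>S. c U * ind U x)"
    using f unfolding Lc_def by blast
  from S have "simple_fun_in B (\<lambda>x. \<Sum>U\<in>S. c U * ind U x)"
  proof (induction S rule: finite_induct)
    case empty
    then show ?case using B unfolding simple_fun_in_def gen_bool_alg_def by auto
  next
    case (insert V S)
    then show ?case using simple_fun_add_scaled_ind[OF B, of V "\<lambda>x. \<Sum>U\<in>S. c U * ind U x"] by simp
  qed
  then show ?thesis using f_eq by simp
qed

lemma simple_fun_imp_Lc:
  fixes f :: "'x \<Rightarrow> 'r::comm_ring_1"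
  assumes f: "simple_fun_in B f"
  shows "f \<in> Lc B"
proof -
  define S where "S = (\<lambda>r. f -` {r}) ` (range f - {0})"
  define c where "c = (\<lambda>U. f (SOME x. x \<in> U))"
  have inj: "inj_on (\<lambda>r. f -` {r}) (range f - {0})"
    by (rule inj_onI) blast
  have "f x = (\<Sum>U\<in>S. c U * ind U x)" for x
  proof -
    have "(\<Sum>U\<in>S. c U * ind U x) = (\<Sum>r\<in>range f - {0}. c (f -` {r}) * ind (f -` {r}) x)"
      unfolding S_def by (simp add: sum.reindex[OF inj])
    also have "\<dots> = (\<Sum>r\<in>range f - {0}. if r = f x then r else 0)"
    proof (rule sum.cong)
      fix r assume "r \<in> range f - {0}"
      then have "c (f -` {r}) = r"
        unfolding c_def by (metis (mono_tags) DiffD1 rangeE someI_ex vimage_singleton_eq)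
      then show "c (f -` {r}) * ind (f -` {r}) x = (if r = f x then r else 0)"
        by (auto simp: ind_def)
    qed simp
    also have "\<dots> = f x"
      using f unfolding simple_fun_in_def by (auto simp: sum.delta')
    finally show ?thesis by simp
  qed
  moreover have "finite S" "S \<subseteq> B" using f unfolding simple_fun_in_def S_def by auto
  ultimately show ?thesis unfolding Lc_def by blast
qed

lemma Lc_iff_simple_fun: "gen_bool_alg B \<Longrightarrow> f \<in> Lc B \<longleftrightarrow> simple_fun_in B f"
  using Lc_imp_simple_fun simple_fun_imp_Lc by blast

lemma Lc_mono: "A \<subseteq> A' \<Longrightarrow> Lc A \<subseteq> Lc A'"
  unfolding Lc_def by blast

lemma CP_mono: "(\<And>t. I1 t \<subseteq> I2 t) \<Longrightarrow> CP I1 \<subseteq> CP I2"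
  unfolding CP_def using Lc_mono by blast

lemma CP_iff_simple_fun:
  assumes "\<And>g. gen_bool_alg (I g)"
  shows "a \<in> CP I \<longleftrightarrow> finite {g. a g \<noteq> (\<lambda>_. 0)} \<and> (\<forall>g. simple_fun_in (I g) (a g))"
  using assms by (simp add: CP_def Lc_iff_simple_fun)

lemma act_zero_fun: "act \<phi> g (\<lambda>_. 0 :: 'r::comm_ring_1) = (\<lambda>_. 0)"
  unfolding act_def by simp

definition corner ::
  "('g::group_add \<Rightarrow> 'x set \<Rightarrow> 'x set) \<Rightarrow> 'x set \<Rightarrow> ('g \<Rightarrow> 'x \<Rightarrow> 'r::comm_ring_1) \<Rightarrow> 'g \<Rightarrow> 'x \<Rightarrow> 'r"
  where "corner \<phi> U a = cp_mult \<phi> (cp_mult \<phi> (delta U 0) a) (delta U 0)"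

context
  fixes B :: "'x set set" and I :: "'g::group_add \<Rightarrow> 'x set set"
    and \<phi> :: "'g \<Rightarrow> 'x set \<Rightarrow> 'x set"
  assumes pa: "partial_action B I \<phi>"
begin

lemma partial_action_gen_bool_alg: "gen_bool_alg B"
  and partial_action_ideal_0: "I 0 = B"
  and partial_action_0: "U \<in> B \<Longrightarrow> \<phi> 0 U = U"
  and partial_action_ideal: "gba_ideal (I t) B"
  and partial_action_Int:
    "U \<in> I (- t) \<Longrightarrow> V \<in> I (- t) \<Longrightarrow> \<phi> t (U \<inter> V) = \<phi> t U \<inter> \<phi> t V"
  and partial_action_Un:
    "U \<in> I (- t) \<Longrightarrow> V \<in> I (- t) \<Longrightarrow> \<phi> t (U \<union> V) = \<phi> t U \<union> \<phi> t V"
  and partial_action_bij: "bij_betw (\<phi> t) (I (- t)) (I t)"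
  using pa unfolding partial_action_def by auto

lemma partial_action_ideal_gen_bool_alg: "gen_bool_alg (I t)"
  using gba_ideal_gen_bool_alg partial_action_ideal partial_action_gen_bool_alg by blast

lemma partial_action_ideal_subset: "I t \<subseteq> B"
  using partial_action_ideal unfolding gba_ideal_def by blast

lemma partial_action_ideal_Int:
  assumes "U \<in> I t" "V \<in> B"
  shows "U \<inter> V \<in> I t" and "V \<inter> U \<in> I t"
  using partial_action_ideal[of t] assms unfolding gba_ideal_def by (auto simp: Int_commute)

lemma partial_action_image: "U \<in> I (- t) \<Longrightarrow> \<phi> t U \<in> I t"
  using partial_action_bij[of t] unfolding bij_betw_def by blast

lemma partial_action_empty: "\<phi> t {} = {}"
proof -
  have "{} \<in> I t" "{} \<in> I (- t)" using partial_action_ideal unfolding gba_ideal_def by auto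
  then obtain A where A: "A \<in> I (- t)" "\<phi> t A = {}"
    using partial_action_bij[of t] unfolding bij_betw_def by (metis imageE)
  then have "\<phi> t ({} \<inter> A) = \<phi> t {} \<inter> \<phi> t A" using partial_action_Int \<open>{} \<in> I (- t)\<close> by blast
  then show ?thesis using A by simp
qed

lemma partial_action_mono:
  assumes "U \<in> I (- t)" "V \<in> I (- t)" "U \<subseteq> V"
  shows "\<phi> t U \<subseteq> \<phi> t V"
  using partial_action_Int[OF assms(1,2)] assms(3) by (metis Int_absorb2 Int_lower2 inf.commute)

lemma partial_action_disjoint:
  assumes "U \<in> I (- t)" "V \<in> I (- t)" "U \<inter> V = {}"
  shows "\<phi> t U \<inter> \<phi> t V = {}"
  using partial_action_Int[OF assms(1,2)] assms(3) partial_action_empty by simp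

lemma partial_action_inverse:
  assumes "A \<in> I t"
  shows "\<phi> t (\<phi> (- t) A) = A"
proof -
  have "A \<in> I (- (- t))" using assms by simp
  moreover have "\<phi> (- t) A \<in> I (- t)" using partial_action_image calculation by blast
  ultimately have "\<phi> t (\<phi> (- t) A) = \<phi> (t + - t) A"
    using pa unfolding partial_action_def by blast
  then show ?thesis using partial_action_0 partial_action_ideal_subset assms by auto
qed

lemma partial_action_Union:
  assumes "finite A" "A \<subseteq> I (- t)"
  shows "\<phi> t (\<Union>A) = \<Union>(\<phi> t ` A)"
  using assms
proof (induction A rule: finite_induct)
  case empty
  then show ?case using partial_action_empty by simp
next
  case (insert V A)
  then have "\<Union>A \<in> I (- t)" by (intro gen_bool_alg_Union partial_action_ideal_gen_bool_alg) auto
  then show ?case using insert partial_action_Un by simp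
qed

lemma act_apply_level_set:
  fixes f :: "'x \<Rightarrow> 'r::comm_ring_1"
  assumes f: "simple_fun_in (I (- g)) f" and s: "s \<noteq> 0" and x: "x \<in> \<phi> g (f -` {s})"
  shows "act \<phi> g f x = s"
proof -
  have "f -` {s} \<noteq> {}" using x partial_action_empty by auto
  then have s_range: "s \<in> range f - {0}" using s by auto
  have "x \<notin> \<phi> g (f -` {t})" if "t \<noteq> 0" "t \<noteq> s" for t
  proof -
    have "\<phi> g (f -` {t}) \<inter> \<phi> g (f -` {s}) = {}"
      using f that s by (intro partial_action_disjoint) (auto simp: simple_fun_in_def)
    then show ?thesis using x by blast
  qed
  then have "act \<phi> g f x = (\<Sum>t\<in>range f - {0}. if t = s then t else 0)"
    unfolding act_def using x by (intro sum.cong) (auto simp: ind_def)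
  also have "\<dots> = s" using s_range f by (simp add: simple_fun_in_def)
  finally show ?thesis .
qed

lemma act_vimage:
  fixes f :: "'x \<Rightarrow> 'r::comm_ring_1"
  assumes f: "simple_fun_in (I (- g)) f" and r: "r \<noteq> 0"
  shows "act \<phi> g f -` {r} = \<phi> g (f -` {r})"
proof (intro set_eqI iffI)
  fix x assume x: "x \<in> act \<phi> g f -` {r}"
  then have "(\<Sum>t\<in>range f - {0}. t * ind (\<phi> g (f -` {t})) x) \<noteq> 0"
    using r unfolding act_def by simp
  then obtain t where "t \<in> range f - {0}" "x \<in> \<phi> g (f -` {t})"
    by (rule sum.not_neutral_contains_not_neutral) (auto simp: ind_def split: if_splits)
  moreover from this have "act \<phi> g f x = t" using act_apply_level_set[OF f] by blast
  ultimately show "x \<in> \<phi> g (f -` {r})" using x by simp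
next
  fix x assume "x \<in> \<phi> g (f -` {r})"
  then show "x \<in> act \<phi> g f -` {r}" using act_apply_level_set[OF f r] by simp
qed

lemma act_simple_fun:
  fixes f :: "'x \<Rightarrow> 'r::comm_ring_1"
  assumes f: "simple_fun_in (I (- g)) f"
  shows "simple_fun_in (I g) (act \<phi> g f)"
proof -
  have "range (act \<phi> g f) \<subseteq> insert 0 (range f)"
  proof
    fix r assume "r \<in> range (act \<phi> g f)"
    then obtain x where x: "x \<in> act \<phi> g f -` {r}" by auto
    show "r \<in> insert 0 (range f)"
    proof (cases "r = 0")
      case False
      then have "f -` {r} \<noteq> {}" using x act_vimage[OF f] partial_action_empty by auto
      then show ?thesis by auto
    qed simp
  qed
  then show ?thesis
    using f act_vimage[OF f] partial_action_image unfolding simple_fun_in_def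
    by (metis finite_insert finite_subset)
qed

lemma act_0:
  fixes f :: "'x \<Rightarrow> 'r::comm_ring_1"
  assumes "simple_fun_in B f"
  shows "act \<phi> 0 f = f"
proof (rule fun_eqI_vimage)
  fix r :: 'r assume r: "r \<noteq> 0"
  have "simple_fun_in (I (- 0)) f" using assms partial_action_ideal_0 by simp
  then have "act \<phi> 0 f -` {r} = \<phi> 0 (f -` {r})" using act_vimage r by blast
  then show "act \<phi> 0 f -` {r} = f -` {r}"
    using partial_action_0 assms r unfolding simple_fun_in_def by simp
qed

lemma simple_fun_ideal_mult_ind:
  fixes f :: "'x \<Rightarrow> 'r::comm_ring_1"
  assumes "simple_fun_in (I t) f" "T \<in> B"
  shows "simple_fun_in (I t) (\<lambda>x. f x * ind T x)" and "simple_fun_in (I t) (\<lambda>x. ind T x * f x)"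
proof -
  have "f -` {r} \<inter> T \<in> I t" if "r \<noteq> 0" for r
    using assms that partial_action_ideal_Int unfolding simple_fun_in_def by blast
  then show "simple_fun_in (I t) (\<lambda>x. f x * ind T x)" and "simple_fun_in (I t) (\<lambda>x. ind T x * f x)"
    using simple_fun_mult_ind[OF assms(1)] by blast+
qed

lemma partial_action_CP_iff:
  "a \<in> CP I \<longleftrightarrow> finite {g. a g \<noteq> (\<lambda>_. 0)} \<and> (\<forall>g. simple_fun_in (I g) (a g))"
  by (rule CP_iff_simple_fun) (rule partial_action_ideal_gen_bool_alg)

lemma partial_action_conj_Int:
  assumes "S \<in> I k" "U \<in> B"
  shows "U \<inter> \<phi> (- k) S \<in> I (- k)"
  using assms partial_action_image[of S "- k"] partial_action_ideal_Int by simp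

lemma act_conj_mult_ind:
  fixes f :: "'x \<Rightarrow> 'r::comm_ring_1"
  assumes f: "simple_fun_in (I k) f" and T: "T \<in> B"
  shows "act \<phi> k (\<lambda>y. act \<phi> (- k) f y * ind T y)
       = (\<lambda>x. f x * ind (\<phi> k (T \<inter> \<phi> (- k) {y. f y \<noteq> 0})) x)"
proof (rule fun_eqI_vimage)
  fix r :: 'r assume r: "r \<noteq> 0"
  have f': "simple_fun_in (I (- (- k))) f" using f by simp
  have hT: "simple_fun_in (I (- k)) (\<lambda>y. act \<phi> (- k) f y * ind T y)"
    using act_simple_fun[OF f'] T by (rule simple_fun_ideal_mult_ind)
  define A S where "A = f -` {r}" and "S = {y. f y \<noteq> 0}"
  have A: "A \<in> I k" using f r unfolding simple_fun_in_def A_def by blast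
  have S: "S \<in> I k"
    unfolding S_def by (rule simple_fun_support[OF partial_action_ideal_gen_bool_alg f])
  have A': "\<phi> (- k) A \<in> I (- k)" using partial_action_image[of A "- k"] A by simp
  have "\<phi> (- k) A \<subseteq> \<phi> (- k) S"
    using partial_action_mono[of A "- k" S] A S r by (auto simp: A_def S_def)
  then have "\<phi> (- k) A \<inter> T = \<phi> (- k) A \<inter> (T \<inter> \<phi> (- k) S)" by blast
  moreover have "(\<lambda>y. act \<phi> (- k) f y * ind T y) -` {r} = \<phi> (- k) A \<inter> T"
    using vimage_mult_ind[OF r, of "act \<phi> (- k) f" T] act_vimage[OF f' r] by (simp add: A_def)
  ultimately have "act \<phi> k (\<lambda>y. act \<phi> (- k) f y * ind T y) -` {r}
      = \<phi> k (\<phi> (- k) A \<inter> (T \<inter> \<phi> (- k) S))"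
    using act_vimage[OF hT r] by simp
  also have "\<dots> = \<phi> k (\<phi> (- k) A) \<inter> \<phi> k (T \<inter> \<phi> (- k) S)"
    using partial_action_Int[OF A'] partial_action_conj_Int[OF S T] by simp
  also have "\<dots> = A \<inter> \<phi> k (T \<inter> \<phi> (- k) S)" using partial_action_inverse[OF A] by simp
  finally show "act \<phi> k (\<lambda>y. act \<phi> (- k) f y * ind T y) -` {r}
      = (\<lambda>x. f x * ind (\<phi> k (T \<inter> \<phi> (- k) {y. f y \<noteq> 0})) x) -` {r}"
    using vimage_mult_ind[OF r, of f] by (simp add: A_def S_def)
qed

lemma cp_mult_delta_left:
  fixes a :: "'g \<Rightarrow> 'x \<Rightarrow> 'r::comm_ring_1"
  assumes U: "U \<in> B" and a: "\<And>k. simple_fun_in (I k) (a k)"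
  shows "cp_mult \<phi> (delta U 0) a = (\<lambda>k x. ind U x * a k x)"
proof (cases "ind U = (\<lambda>_. 0 :: 'r)")
  case True
  then show ?thesis by (simp add: cp_mult_def delta_def)
next
  case False
  then have supp: "{g. delta U (0::'g) g \<noteq> (\<lambda>_. 0 :: 'r)} = {0}" by (auto simp: delta_def)
  have "act \<phi> 0 (ind U :: 'x \<Rightarrow> 'r) = ind U"
    by (rule act_0[OF simple_fun_ind[OF partial_action_gen_bool_alg U]])
  moreover have "act \<phi> 0 (\<lambda>y. ind U y * a k y) = (\<lambda>y. ind U y * a k y)" for k
  proof (rule act_0)
    have "simple_fun_in (I 0) (\<lambda>y. ind U y * a k y)"
      using simple_fun_mono[OF a partial_action_ideal_subset] U partial_action_ideal_0
      by (intro simple_fun_ideal_mult_ind(2)) auto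
    then show "simple_fun_in B (\<lambda>y. ind U y * a k y)" using partial_action_ideal_0 by simp
  qed
  ultimately show ?thesis unfolding cp_mult_def supp by (simp add: delta_def)
qed

lemma cp_mult_delta_right:
  fixes b :: "'g \<Rightarrow> 'x \<Rightarrow> 'r::comm_ring_1"
  assumes U: "U \<in> B" and b: "\<And>k. simple_fun_in (I k) (b k)"
    and fin: "finite {g. b g \<noteq> (\<lambda>_. 0)}"
  shows "cp_mult \<phi> b (delta U 0) = (\<lambda>k x. b k x * ind (\<phi> k (U \<inter> \<phi> (- k) {y. b k y \<noteq> 0})) x)"
proof (intro ext)
  fix k x
  let ?G = "{g. b g \<noteq> (\<lambda>_. 0)}"
  have "cp_mult \<phi> b (delta U 0) k x =
      (\<Sum>g\<in>?G. if g = k then act \<phi> k (\<lambda>y. act \<phi> (- k) (b k) y * ind U y) x else 0)"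
    unfolding cp_mult_def
  proof (rule sum.cong)
    fix g
    have "- g + k \<noteq> 0" if "g \<noteq> k" using that by (metis add_minus_cancel add_0_right)
    then show "act \<phi> g (\<lambda>y. act \<phi> (- g) (b g) y * delta U 0 (- g + k) y) x =
        (if g = k then act \<phi> k (\<lambda>y. act \<phi> (- k) (b k) y * ind U y) x else 0)"
      by (auto simp: delta_def act_zero_fun)
  qed simp
  also have "\<dots> = (if k \<in> ?G then act \<phi> k (\<lambda>y. act \<phi> (- k) (b k) y * ind U y) x else 0)"
    using fin by simp
  also have "\<dots> = b k x * ind (\<phi> k (U \<inter> \<phi> (- k) {y. b k y \<noteq> 0})) x"
    using act_conj_mult_ind[OF b U] by auto
  finally show "cp_mult \<phi> b (delta U 0) k x = b k x * ind (\<phi> k (U \<inter> \<phi> (- k) {y. b k y \<noteq> 0})) x" .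
qed

lemma ind_mult_support_in_ideal:
  fixes a :: "'g \<Rightarrow> 'x \<Rightarrow> 'r::comm_ring_1"
  assumes "a \<in> CP I" "U \<in> B"
  shows "{y. ind U y * a k y \<noteq> 0} \<in> I k"
proof -
  have "simple_fun_in (I k) (a k)" using assms(1) partial_action_CP_iff by blast
  then have "simple_fun_in (I k) (\<lambda>y. ind U y * a k y)"
    using assms(2) by (rule simple_fun_ideal_mult_ind(2))
  then show ?thesis by (rule simple_fun_support[OF partial_action_ideal_gen_bool_alg])
qed

lemma corner_eq:
  fixes a :: "'g \<Rightarrow> 'x \<Rightarrow> 'r::comm_ring_1"
  assumes U: "U \<in> B" and a: "a \<in> CP I"
  shows "corner \<phi> U a
    = (\<lambda>k x. ind U x * a k x * ind (\<phi> k (U \<inter> \<phi> (- k) {y. ind U y * a k y \<noteq> 0})) x)"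
proof -
  have fin: "finite {g. a g \<noteq> (\<lambda>_. 0)}" and a_simple: "\<And>k. simple_fun_in (I k) (a k)"
    using a partial_action_CP_iff by auto
  have "finite {g. (\<lambda>x. ind U x * a g x) \<noteq> (\<lambda>_. 0)}"
    by (rule finite_subset[OF _ fin]) auto
  moreover have "simple_fun_in (I k) (\<lambda>x. ind U x * a k x)" for k
    using a_simple U by (rule simple_fun_ideal_mult_ind)
  ultimately show ?thesis
    unfolding corner_def cp_mult_delta_left[OF U a_simple] by (intro cp_mult_delta_right[OF U])
qed

lemma corner_in_CP:
  fixes a :: "'g \<Rightarrow> 'x \<Rightarrow> 'r::comm_ring_1"
  assumes U: "U \<in> B" and a: "a \<in> CP I"
  shows "corner \<phi> U a \<in> CP I"
proof -
  define Q where "Q k = \<phi> k (U \<inter> \<phi> (- k) {y. ind U y * a k y \<noteq> (0::'r)})" for k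
  have "simple_fun_in (I k) (\<lambda>x. ind U x * a k x)" for k
    using a U partial_action_CP_iff by (intro simple_fun_ideal_mult_ind(2)) auto
  moreover have "Q k \<in> B" for k
    unfolding Q_def using partial_action_image partial_action_ideal_subset
      partial_action_conj_Int[OF ind_mult_support_in_ideal[OF a U] U] by blast
  ultimately have "simple_fun_in (I k) (\<lambda>x. ind U x * a k x * ind (Q k) x)" for k
    by (rule simple_fun_ideal_mult_ind(1))
  moreover have "finite {g. a g \<noteq> (\<lambda>_. 0)}" using a partial_action_CP_iff by blast
  then have "finite {k. (\<lambda>x. ind U x * a k x * ind (Q k) x) \<noteq> (\<lambda>_. 0)}"
    by (rule finite_subset[rotated]) auto
  ultimately show ?thesis unfolding corner_eq[OF U a] Q_def partial_action_CP_iff by blast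
qed

lemma corner_idem:
  fixes a :: "'g \<Rightarrow> 'x \<Rightarrow> 'r::comm_ring_1"
  assumes U: "U \<in> B" and a: "a \<in> CP I"
  shows "corner \<phi> U (corner \<phi> U a) = corner \<phi> U a"
proof -
  define S where "S k = {y. ind U y * a k y \<noteq> (0::'r)}" for k
  define Q where "Q k = \<phi> k (U \<inter> \<phi> (- k) (S k))" for k
  have b: "corner \<phi> U a = (\<lambda>k x. ind U x * a k x * ind (Q k) x)"
    unfolding corner_eq[OF U a] S_def Q_def ..
  have S_in: "S k \<in> I k" for k
    unfolding S_def using ind_mult_support_in_ideal[OF a U] .
  have Q_in: "Q k \<in> I k" for k
    unfolding Q_def using partial_action_image partial_action_conj_Int[OF S_in U] by simp
  have Q_fixed: "\<phi> k (U \<inter> \<phi> (- k) (S k \<inter> Q k)) = Q k" for k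
  proof -
    have "\<phi> (- k) (Q k) = U \<inter> \<phi> (- k) (S k)"
      using partial_action_inverse[OF partial_action_conj_Int[OF S_in U]] unfolding Q_def by simp
    moreover have "\<phi> (- k) (S k \<inter> Q k) = \<phi> (- k) (S k) \<inter> \<phi> (- k) (Q k)"
      using partial_action_Int[of "S k" "- k" "Q k"] S_in Q_in by simp
    ultimately show ?thesis unfolding Q_def by (simp add: Int_ac)
  qed
  have S_corner: "{y. ind U y * (ind U y * a k y * ind (Q k) y) \<noteq> 0} = S k \<inter> Q k" for k
    unfolding S_def by (auto simp: ind_def)
  have "corner \<phi> U (corner \<phi> U a) = (\<lambda>k x. ind U x * corner \<phi> U a k x
      * ind (\<phi> k (U \<inter> \<phi> (- k) {y. ind U y * corner \<phi> U a k y \<noteq> 0})) x)"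
    by (rule corner_eq[OF U corner_in_CP[OF U a]])
  also have "\<dots> = (\<lambda>k x. ind U x * (ind U x * a k x * ind (Q k) x) * ind (Q k) x)"
    unfolding b S_corner Q_fixed ..
  also have "\<dots> = corner \<phi> U a" unfolding b by (intro ext) (simp add: ind_def)
  finally show ?thesis .
qed

end

lemma cover_condition_bound:
  assumes pa: "partial_action B I \<phi>" and J: "gen_bool_alg J"
    and C1: "is_cover C1 B1" and B1: "B1 \<subseteq> B" and D: "is_cover D (I (- k))"
    and cond: "\<forall>X\<in>C1. \<forall>Y\<in>C1. \<forall>V\<in>D. \<exists>Z\<in>J. X \<inter> \<phi> k (Y \<inter> V) \<subseteq> Z"
    and U: "U \<in> B1" and W: "W \<in> I (- k)"
  shows "\<exists>Z\<in>J. U \<inter> \<phi> k (U \<inter> W) \<subseteq> Z"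
proof -
  obtain F1 where F1: "finite F1" "F1 \<subseteq> C1" "U \<subseteq> \<Union>F1"
    using C1 U unfolding is_cover_def by blast
  obtain F where F: "finite F" "F \<subseteq> D" "W \<subseteq> \<Union>F"
    using D W unfolding is_cover_def by blast
  define YV where "YV = (\<lambda>(Y, V). Y \<inter> V) ` (F1 \<times> F)"
  have "C1 \<subseteq> B" "D \<subseteq> I (- k)" using C1 B1 D unfolding is_cover_def by auto
  then have YV: "finite YV" "YV \<subseteq> I (- k)"
    using F1(1,2) F(1,2) unfolding YV_def by (auto intro!: partial_action_ideal_Int(2)[OF pa])
  have "U \<inter> W \<in> I (- k)" using partial_action_ideal_Int(2)[OF pa W] U B1 by blast
  moreover have "\<Union>YV \<in> I (- k)"
    using YV by (intro gen_bool_alg_Union partial_action_ideal_gen_bool_alg[OF pa])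
  moreover have "U \<inter> W \<subseteq> \<Union>YV"
  proof
    fix x assume "x \<in> U \<inter> W"
    then obtain Y V where "Y \<in> F1" "V \<in> F" "x \<in> Y \<inter> V" using F1(3) F(3) by blast
    then show "x \<in> \<Union>YV" unfolding YV_def by blast
  qed
  ultimately have "\<phi> k (U \<inter> W) \<subseteq> \<phi> k (\<Union>YV)" by (rule partial_action_mono[OF pa])
  then have UW: "\<phi> k (U \<inter> W) \<subseteq> \<Union>(\<phi> k ` YV)" using partial_action_Union[OF pa YV] by simp
  define P where "P = (\<lambda>(X, A). X \<inter> \<phi> k A) ` (F1 \<times> YV)"
  have covered: "U \<inter> \<phi> k (U \<inter> W) \<subseteq> \<Union>P"
  proof
    fix x assume x: "x \<in> U \<inter> \<phi> k (U \<inter> W)"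
    then obtain X A where "X \<in> F1" "A \<in> YV" "x \<in> X \<inter> \<phi> k A" using F1(3) UW by blast
    then show "x \<in> \<Union>P" unfolding P_def by blast
  qed
  have "\<exists>Z\<in>J. p \<subseteq> Z" if "p \<in> P" for p
  proof -
    from that obtain X A where "X \<in> F1" "A \<in> YV" "p = X \<inter> \<phi> k A"
      unfolding P_def by blast
    moreover from \<open>A \<in> YV\<close> obtain Y V where "Y \<in> F1" "V \<in> F" "A = Y \<inter> V"
      unfolding YV_def by blast
    ultimately show ?thesis using cond F1(2) F(2) by blast
  qed
  then obtain z where z: "\<And>p. p \<in> P \<Longrightarrow> z p \<in> J \<and> p \<subseteq> z p" by metis
  have "\<Union>(z ` P) \<in> J"
    using z F1(1) YV(1) unfolding P_def by (intro gen_bool_alg_Union[OF J]) auto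
  moreover have "U \<inter> \<phi> k (U \<inter> W) \<subseteq> \<Union>(z ` P)" using covered z by blast
  ultimately show ?thesis by blast
qed

lemma corner_in_CP_subaction:
  fixes a :: "'g::group_add \<Rightarrow> 'x \<Rightarrow> 'r::comm_ring_1"
  assumes sub: "partial_subaction B1 I1 \<phi>1 B2 I2 \<phi>2" and ideal: "gba_ideal B1 B2"
    and bound: "\<And>k W. W \<in> I2 (- k) \<Longrightarrow> \<exists>Z\<in>I1 k. U \<inter> \<phi>2 k (U \<inter> W) \<subseteq> Z"
    and U: "U \<in> B1" and a: "a \<in> CP I2"
  shows "corner \<phi>2 U a \<in> CP I1"
proof -
  have pa1: "partial_action B1 I1 \<phi>1" and pa2: "partial_action B2 I2 \<phi>2" and "B1 \<subseteq> B2"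
    using sub unfolding partial_subaction_def by auto
  then have U2: "U \<in> B2" using U by blast
  have b2: "corner \<phi>2 U a \<in> CP I2" by (rule corner_in_CP[OF pa2 U2 a])
  have "simple_fun_in (I1 k) (corner \<phi>2 U a k)" for k
  proof -
    define W where "W = \<phi>2 (- k) {y. ind U y * a k y \<noteq> 0}"
    have "W \<in> I2 (- k)"
      unfolding W_def using partial_action_image[OF pa2] ind_mult_support_in_ideal[OF pa2 a U2] by simp
    then obtain Z where Z: "Z \<in> I1 k" "U \<inter> \<phi>2 k (U \<inter> W) \<subseteq> Z" by (blast dest: bound)
    have supp: "{x. corner \<phi>2 U a k x \<noteq> 0} \<subseteq> U \<inter> \<phi>2 k (U \<inter> W)"
      unfolding corner_eq[OF pa2 U2 a] W_def by (rule support_ind_mult_ind)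
    have "V \<in> I1 k" if V: "V \<in> I2 k" "V \<subseteq> U \<inter> \<phi>2 k (U \<inter> W)" for V
    proof -
      have "V \<in> B2" using V(1) partial_action_ideal_subset[OF pa2] by blast
      then have "U \<inter> V \<in> B1" using ideal U unfolding gba_ideal_def by blast
      then have "Z \<inter> V \<in> I1 k" using partial_action_ideal_Int[OF pa1 Z(1)] V(2) by (simp add: Int_absorb1)
      then show ?thesis using Z(2) V(2) by (simp add: Int_absorb1)
    qed
    moreover have "simple_fun_in (I2 k) (corner \<phi>2 U a k)"
      using b2 unfolding partial_action_CP_iff[OF pa2] by simp
    moreover have "corner \<phi>2 U a k -` {r} \<subseteq> U \<inter> \<phi>2 k (U \<inter> W)" if "r \<noteq> 0" for r
      using supp that by auto
    ultimately show ?thesis unfolding simple_fun_in_def by blast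
  qed
  moreover have "finite {k. corner \<phi>2 U a k \<noteq> (\<lambda>_. 0)}"
    using b2 unfolding partial_action_CP_iff[OF pa2] by simp
  ultimately show ?thesis unfolding partial_action_CP_iff[OF pa1] by simp
qed

theorem theorem4p7:
  fixes B1 B2 :: "'x set set"
    and I1 I2 :: "'g::group_add \<Rightarrow> 'x set set"
    and \<phi>1 \<phi>2 :: "'g \<Rightarrow> 'x set \<Rightarrow> 'x set"
    and C1 :: "'x set set"
    and C :: "'g \<Rightarrow> 'x set set"
  assumes sub: "partial_subaction B1 I1 \<phi>1 B2 I2 \<phi>2"
    and ideal: "gba_ideal B1 B2"
    and C1: "is_cover C1 B1"
    and Cg: "\<forall>g. is_cover (C g) (I2 g)"
    and cond: "\<forall>g. \<forall>X\<in>C1. \<forall>Y\<in>C1. \<forall>V\<in>C (- g).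
                 \<exists>Z\<in>I1 g. X \<inter> \<phi>2 g (Y \<inter> V) \<subseteq> Z"
    and U: "U \<in> B1"
  shows "{cp_mult \<phi>2 (cp_mult \<phi>2 (delta U 0) a) (delta U 0) :: 'g \<Rightarrow> 'x \<Rightarrow> 'r::comm_ring_1
            | a. a \<in> CP I1}
       = {cp_mult \<phi>2 (cp_mult \<phi>2 (delta U 0) a) (delta U 0) | a. a \<in> CP I2}"
proof -
  have pa1: "partial_action B1 I1 \<phi>1" and pa2: "partial_action B2 I2 \<phi>2"
    and B12: "B1 \<subseteq> B2" and I12: "\<And>t. I1 t \<subseteq> I2 t"
    using sub unfolding partial_subaction_def by auto
  have bound: "\<exists>Z\<in>I1 k. U \<inter> \<phi>2 k (U \<inter> W) \<subseteq> Z" if "W \<in> I2 (- k)" for k W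
    using pa2 partial_action_ideal_gen_bool_alg[OF pa1] C1 B12 spec[OF Cg, of "- k"]
      spec[OF cond, of k] U that
    by (rule cover_condition_bound)
  show ?thesis
    unfolding corner_def[symmetric]
  proof (intro subset_antisym subsetI)
    fix c assume "c \<in> {corner \<phi>2 U a | a. a \<in> CP I1}"
    then obtain a where "a \<in> CP I1" and "c = corner \<phi>2 U a" by blast
    then show "c \<in> {corner \<phi>2 U a | a. a \<in> CP I2}" using CP_mono[of I1 I2, OF I12] by blast
  next
    fix c assume "c \<in> {corner \<phi>2 U a | a. a \<in> CP I2}"
    then obtain a where a: "a \<in> CP I2" and c: "c = corner \<phi>2 U a" by blast
    have "c = corner \<phi>2 U (corner \<phi>2 U a)"
      unfolding c using corner_idem[OF pa2 _ a] U B12 by auto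
    then show "c \<in> {corner \<phi>2 U a | a. a \<in> CP I1}"
      using corner_in_CP_subaction[OF sub ideal bound U a] by blast
  qed
qed

end
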